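(* Fix constants $0<\theta<\bar L<\infty$, $0<\sigma<M<\infty$, non-negative constants $p,\gamma,\mu,\beta_0$, constants $c_S>0$, $c_I>0$, $d_0$, and a non-negative smooth function $\beta:\mathbb{R}\to\mathbb{R}$. Let $\Psi,\Phi$ be probability density functions on $\mathbb{R}_+$ with $\operatorname{supp}(\Psi)\subset[\theta,\bar L]$ and $\operatorname{supp}(\Phi)\subset[\sigma,M]$. Continuous system: let $(S,L,I,R^{T},R^{P},D)$ be the solution of $$\begin{aligned} S'(t)&=-\beta(t)I(t)S(t)+p\gamma\int_{\mathbb{R}_+}I(t-\rho)\Phi(\rho)\,d\rho,\\ L'(t)&=\beta(t)I(t)S(t)-\int_{\mathbb{R}_+}\beta(t-\tau)I(t-\tau)S(t-\tau)\Psi(\tau)\,d\tau,\\ I'(t)&=\int_{\mathbb{R}_+}\beta(t-\tau)I(t-\tau)S(t-\tau)\Psi(\tau)\,d\tau-\gamma I(t)-\mu I(t),\\ (R^{T})'(t)&=p\gamma I(t)-p\gamma\int_{\mathbb{R}_+}I(t-\rho)\Phi(\rho)\,d\rho,\\ (R^{P})'(t)&=(1-p)\gamma I(t),\qquad D'(t)=\mu I(t), \end{aligned}$$ for $t>0$, with history $S(s)=c_S$ and $I(s)=c_I$ for all $s\le 0$, and initial data $L(0)=\beta_0c_Ic_S\int_\theta^{\bar L}\Psi(\tau)\tau\,d\tau$, $R^{T}(0)=c_Ip\gamma\int_\sigma^M\Phi(\rho)\rho\,d\rho$, $R^{P}(0)=(1-p)\gamma c_I\int_\theta^{\bar L}\Psi(\tau)\tau\,d\tau$,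 $D(0)=d_0$. Discretization: for each integer $j>1$ and $i=0,\dots,j$ let $d_i^j=\sigma+\frac{i(M-\sigma)}{j}$ and $e_i^j=\theta+\frac{i(\bar L-\theta)}{j}$; for $i=1,\dots,j$ choose $\rho_i^j\in[d_{i-1}^j,d_i^j]$ and $\tau_i^j\in[e_{i-1}^j,e_i^j]$, and set $\omega_i^j=\int_{d_{i-1}^j}^{d_i^j}\Phi\,d\lambda$, $\varpi_i^j=\int_{e_{i-1}^j}^{e_i^j}\Psi\,d\lambda$. Discrete system: for each $j$, let $(S_j,L_j,I_j,R_j^{T},R_j^{P},D_j)$ be the solution of $$\begin{aligned} S_j'(t)&=-\beta(t)I_j(t)S_j(t)+p\gamma\sum_{i=1}^j\omega_i^jI_j(t-\rho_i^j),\\ L_j'(t)&=\beta(t)I_j(t)S_j(t)-\sum_{i=1}^j\varpi_i^j\beta(t-\tau_i^j)I_j(t-\tau_i^j)S_j(t-\tau_i^j),\\ I_j'(t)&=\sum_{i=1}^j\varpi_i^j\beta(t-\tau_i^j)I_j(t-\tau_i^j)S_j(t-\tau_i^j)-\gamma I_j(t)-\mu I_j(t),\\ (R_j^{T})'(t)&=p\gamma I_j(t)-p\gamma\sum_{i=1}^j\omega_i^jI_j(t-\rho_i^j),\\ (R_j^{P})'(t)&=(1-p)\gamma I_j(t),\qquad D_j'(t)=\mu I_j(t), \end{aligned}$$ with the same history $S_j(s)=c_S$, $I_j(s)=c_I$ for $s\le0$ and initial data $L_j(0)=\beta_0c_Ic_S\sum_{i=1}^j\varpi_i^j\tau_i^j$,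 $R_j^{T}(0)=c_Ip\gamma\sum_{i=1}^j\omega_i^j\rho_i^j$, $R_j^{P}(0)=(1-p)\gamma c_I\sum_{i=1}^j\varpi_i^j\tau_i^j$, $D_j(0)=d_0$. Then for every $T>0$, the solution $(S_j,L_j,I_j,R_j^{T},R_j^{P})$ converges in the supremum norm on $[0,T]$ to $(S,L,I,R^{T},R^{P})$ as $j\to\infty$.
   Context: This is an $SLIR^{T}R^{P}D$ endemic model: $S$ susceptible, $L$ latent, $I$ infectious, $R^T$ temporarily recovered, $R^P$ permanently recovered, $D$ dead; $\beta$ is the contact rate, $\gamma$ the recovery rate, $\mu$ the disease death rate, $p$ the proportion acquiring temporary immunity. $\lambda$ denotes Lebesgue measure. The solution of the continuous system is continuous on $[0,\infty)$ and differentiable on $(0,\infty)$. (The upper endpoint of the support of $\Psi$, called $L$ in the paper, is denoted $\bar L$ here to avoid a clash with the latent compartment $L$.) *)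

theory Defs
  imports "HOL-Analysis.Analysis"
begin

definition smooth_real :: "(real \<Rightarrow> real) \<Rightarrow> bool" where
  "smooth_real f \<longleftrightarrow> (\<forall>n x. ((deriv ^^ n) f) differentiable (at x))"

definition node :: "real \<Rightarrow> real \<Rightarrow> nat \<Rightarrow> nat \<Rightarrow> real" where
  "node a b j i = a + real i * (b - a) / real j"

definition pdf_supported :: "(real \<Rightarrow> real) \<Rightarrow> real \<Rightarrow> real \<Rightarrow> bool" where
  "pdf_supported f a b \<longleftrightarrow>
     f \<in> borel_measurable lborel \<and> (\<forall>x. 0 \<le> f x) \<and>
     set_integrable lborel {0..} f \<and> (LINT x:{0..}|lborel. f x) = 1 \<and>
     closure {x \<in> {0..}. f x \<noteq> 0} \<subseteq> {a..b}"

end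

theory Submission
  imports Defs
begin

text \<open>
  Method of steps. Both delays are bounded below by \<open>h = min \<theta> \<sigma>\<close>, so on an interval
  \<open>[a, a + h]\<close> the delayed terms only involve values of \<open>S\<close> and \<open>I\<close> at times \<open>\<le> a\<close>.
  If \<open>S\<^sub>j \<rightarrow> S\<close> and \<open>I\<^sub>j \<rightarrow> I\<close> uniformly up to time \<open>a\<close>, then the discrete delay sums
  converge uniformly on \<open>[a, a + h]\<close> to the delay integrals: they are Riemann sums of a
  uniformly continuous integrand against the cell masses of the density, whose mesh tends to 0.
  The errors \<open>I\<^sub>j - I\<close> and \<open>S\<^sub>j - S\<close> then solve linear equations \<open>e' = -c e + f\<close> with
  bounded \<open>c\<close> and uniformly small \<open>f\<close>, and a Gronwall estimate propagates uniform
  convergence to \<open>[a, a + h]\<close>. Starting from the common history and iterating covers any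
  \<open>[0, T]\<close>; the remaining compartments are integrals of converging right-hand sides, and
  their initial values converge because they are Riemann sums for the first moments.
\<close>

section \<open>Uniform partitions and cell weights\<close>

lemma node_0 [simp]: "node a b j 0 = a"
  unfolding node_def by simp

lemma node_mono: "a \<le> b \<Longrightarrow> i \<le> i' \<Longrightarrow> node a b j i \<le> node a b j i'"
  unfolding node_def by (intro add_left_mono divide_right_mono mult_right_mono) auto

lemma node_last: "0 < j \<Longrightarrow> node a b j j = b"
  unfolding node_def by simp

lemma node_diff: "1 \<le> i \<Longrightarrow> node a b j i - node a b j (i - 1) = (b - a) / j"
  unfolding node_def by (cases "j = 0") (auto simp: of_nat_diff field_simps)

lemma cell_subset:
  assumes "a \<le> b" "i \<in> {1..j}"
  shows "{node a b j (i - 1)..node a b j i} \<subseteq> {a..b}"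
  using node_mono[OF assms(1), of 0 "i - 1" j] node_mono[OF assms(1), of i j j] node_last[of j a b] assms
  by auto

definition cell_weight :: "(real \<Rightarrow> real) \<Rightarrow> real \<Rightarrow> real \<Rightarrow> nat \<Rightarrow> nat \<Rightarrow> real" where
  "cell_weight \<Psi> a b j i = (LINT x:{node a b j (i - 1)..node a b j i}|lborel. \<Psi> x)"

lemma cell_weight_nonneg: "(\<And>x. 0 \<le> \<Psi> x) \<Longrightarrow> 0 \<le> cell_weight \<Psi> a b j i"
  unfolding cell_weight_def set_lebesgue_integral_def by (rule integral_nonneg_AE) simp

lemma set_integral_sum_cells:
  fixes f :: "real \<Rightarrow> real"
  assumes f: "set_integrable lborel {a..b} f" and ab: "a \<le> b" and j: "0 < j"
  shows "(LINT x:{a..b}|lborel. f x) = (\<Sum>i=1..j. LINT x:{node a b j (i - 1)..node a b j i}|lborel. f x)"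
proof -
  let ?n = "node a b j"
  have "(LINT x:{a..?n m}|lborel. f x) = (\<Sum>i=1..m. LINT x:{?n (i - 1)..?n i}|lborel. f x)"
    if "m \<le> j" for m
    using that
  proof (induction m)
    case 0
    have "AE x in lborel. x \<noteq> a" by (rule AE_lborel_singleton)
    then show ?case
      unfolding set_lebesgue_integral_def by (auto intro!: integral_eq_zero_AE elim!: AE_mp)
  next
    case (Suc m)
    have le: "a \<le> ?n m" "?n m \<le> ?n (Suc m)" "?n (Suc m) \<le> b"
      using node_mono[OF ab, of 0 m j] node_mono[OF ab, of m "Suc m" j]
        node_mono[OF ab, of "Suc m" j j] node_last[OF j] Suc.prems by auto
    have "{a..?n (Suc m)} = {a..?n m} \<union> {?n m..?n (Suc m)}"
      using le by (simp add: ivl_disj_un_two_touch)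
    moreover have "AE x in lborel. \<not> (x \<in> {a..?n m} \<and> x \<in> {?n m..?n (Suc m)})"
      by (rule AE_mp[OF AE_lborel_singleton[of "?n m"]]) auto
    ultimately have "(LINT x:{a..?n (Suc m)}|lborel. f x)
        = (LINT x:{a..?n m}|lborel. f x) + (LINT x:{?n m..?n (Suc m)}|lborel. f x)"
      using le by (auto intro!: set_integral_Un_AE set_integrable_subset[OF f])
    then show ?case using Suc by simp
  qed
  from this[of j] show ?thesis using node_last[OF j] by simp
qed

lemma sum_cell_weight:
  assumes "set_integrable lborel {a..b} \<Psi>" "a \<le> b" "0 < j"
  shows "(\<Sum>i=1..j. cell_weight \<Psi> a b j i) = (LINT x:{a..b}|lborel. \<Psi> x)"
  using set_integral_sum_cells[OF assms] by (simp add: cell_weight_def)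

lemma set_integrable_continuous_mult:
  fixes g \<Psi> :: "real \<Rightarrow> real"
  assumes g: "continuous_on {a..b} g" and \<Psi>: "set_integrable lborel {a..b} \<Psi>"
  shows "set_integrable lborel {a..b} (\<lambda>x. g x * \<Psi> x)"
proof -
  obtain B where B: "\<forall>x\<in>{a..b}. \<bar>g x\<bar> \<le> B"
    using compact_imp_bounded[OF compact_continuous_image[OF g compact_Icc]]
    by (auto simp: bounded_iff)
  show ?thesis
  proof (rule set_integrable_bound[where f = "\<lambda>x. B * \<Psi> x"])
    show "set_integrable lborel {a..b} (\<lambda>x. B * \<Psi> x)" using \<Psi> by simp
    have "(\<lambda>x. (indicator {a..b} x *\<^sub>R g x) * (indicator {a..b} x *\<^sub>R \<Psi> x)) \<in> borel_measurable lborel"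
      using borel_measurable_continuous_on_indicator[OF _ g] \<Psi>
      unfolding set_integrable_def by (auto intro: borel_measurable_integrable)
    then show "set_borel_measurable lborel {a..b} (\<lambda>x. g x * \<Psi> x)"
      unfolding set_borel_measurable_def by (rule measurable_cong[THEN iffD1, rotated]) (auto simp: indicator_def)
    show "AE x in lborel. x \<in> {a..b} \<longrightarrow> norm (g x * \<Psi> x) \<le> norm (B * \<Psi> x)"
      using B by (intro AE_I2 impI) (simp add: abs_mult mult_right_mono order.trans[OF _ abs_ge_self])
  qed
qed

lemma pdf_supported_nonneg: "pdf_supported \<Psi> a b \<Longrightarrow> 0 \<le> \<Psi> x"
  unfolding pdf_supported_def by blast

lemma pdf_supported_integrable:
  "pdf_supported \<Psi> a b \<Longrightarrow> 0 \<le> a \<Longrightarrow> set_integrable lborel {a..b} \<Psi>"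
  unfolding pdf_supported_def by (auto intro: set_integrable_subset)

lemma pdf_supported_set_integral:
  assumes \<Psi>: "pdf_supported \<Psi> a b" and a: "0 \<le> a"
  shows "(LINT x:{0..}|lborel. h x * \<Psi> x) = (LINT x:{a..b}|lborel. h x * \<Psi> x)"
proof -
  have "\<Psi> x = 0" if "0 \<le> x" "x \<notin> {a..b}" for x
  proof (rule ccontr)
    assume "\<Psi> x \<noteq> 0"
    then have "x \<in> closure {x \<in> {0..}. \<Psi> x \<noteq> 0}"
      using that(1) closure_subset by fastforce
    then show False
      using \<Psi> that(2) unfolding pdf_supported_def by blast
  qed
  then have "indicator {0..} x * (h x * \<Psi> x) = indicator {a..b} x * (h x * \<Psi> x)" for x :: real
    using a by (cases "0 \<le> x"; cases "x \<in> {a..b}") auto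
  then show ?thesis
    unfolding set_lebesgue_integral_def by (intro arg_cong[where f = "integral\<^sup>L lborel"] ext) simp
qed

section \<open>Riemann sums against a density\<close>

lemma set_integral_approx_const:
  fixes f \<Psi> :: "real \<Rightarrow> real"
  assumes f\<Psi>: "set_integrable lborel C (\<lambda>x. f x * \<Psi> x)" and \<Psi>: "set_integrable lborel C \<Psi>"
    and nonneg: "\<And>x. 0 \<le> \<Psi> x" and close: "\<And>x. x \<in> C \<Longrightarrow> \<bar>c - f x\<bar> \<le> \<epsilon>"
  shows "\<bar>(LINT x:C|lborel. \<Psi> x) * c - (LINT x:C|lborel. f x * \<Psi> x)\<bar> \<le> \<epsilon> * (LINT x:C|lborel. \<Psi> x)"
proof -
  have "(LINT x:C|lborel. \<Psi> x) * c - (LINT x:C|lborel. f x * \<Psi> x)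
      = (LINT x:C|lborel. c * \<Psi> x - f x * \<Psi> x)"
    using f\<Psi> \<Psi> by (subst set_integral_diff(2)) (auto simp: mult.commute)
  also have "\<bar>\<dots>\<bar> \<le> (LINT x:C|lborel. \<bar>c * \<Psi> x - f x * \<Psi> x\<bar>)"
    using set_integral_norm_bound[of lborel C "\<lambda>x. c * \<Psi> x - f x * \<Psi> x"] f\<Psi> \<Psi> by simp
  also have "\<dots> \<le> (LINT x:C|lborel. \<epsilon> * \<Psi> x)"
  proof (rule set_integral_mono)
    show "set_integrable lborel C (\<lambda>x. \<bar>c * \<Psi> x - f x * \<Psi> x\<bar>)"
      using f\<Psi> \<Psi> by (intro set_integrable_abs set_integral_diff) auto
    show "set_integrable lborel C (\<lambda>x. \<epsilon> * \<Psi> x)" using \<Psi> by simp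
    fix x assume "x \<in> C"
    then have "\<bar>c - f x\<bar> * \<Psi> x \<le> \<epsilon> * \<Psi> x" using close nonneg by (intro mult_right_mono)
    then show "\<bar>c * \<Psi> x - f x * \<Psi> x\<bar> \<le> \<epsilon> * \<Psi> x"
      using nonneg[of x] by (simp add: abs_mult left_diff_distrib[symmetric])
  qed
  finally show ?thesis by simp
qed

lemma continuous_on_modulus:
  fixes f :: "real \<Rightarrow> real"
  assumes "\<And>e. e > 0 \<Longrightarrow> \<exists>\<delta>>0. \<forall>x\<in>A. \<forall>y\<in>A. \<bar>x - y\<bar> < \<delta> \<longrightarrow> \<bar>f x - f y\<bar> \<le> e"
  shows "continuous_on A f"
  unfolding continuous_on_iff dist_real_def
proof (intro ballI allI impI)
  fix x and e :: real assume x: "x \<in> A" and e: "e > 0"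
  obtain \<delta> where "\<delta> > 0" and \<delta>: "\<forall>x\<in>A. \<forall>y\<in>A. \<bar>x - y\<bar> < \<delta> \<longrightarrow> \<bar>f x - f y\<bar> \<le> e / 2"
    using assms[of "e / 2"] e by auto
  show "\<exists>d>0. \<forall>y\<in>A. \<bar>y - x\<bar> < d \<longrightarrow> \<bar>f y - f x\<bar> < e"
  proof (intro exI[of _ \<delta>] conjI ballI impI)
    fix y assume "y \<in> A" "\<bar>y - x\<bar> < \<delta>"
    then have "\<bar>f y - f x\<bar> \<le> e / 2" using \<delta> x by blast
    then show "\<bar>f y - f x\<bar> < e" using e by linarith
  qed (rule \<open>\<delta> > 0\<close>)
qed

lemma riemann_sum_uniform_limit:
  fixes \<Psi> :: "real \<Rightarrow> real" and F :: "'a \<Rightarrow> real \<Rightarrow> real" and \<tau> :: "nat \<Rightarrow> nat \<Rightarrow> real"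
  assumes ab: "a \<le> b" and \<Psi>: "set_integrable lborel {a..b} \<Psi>" and nonneg: "\<And>x. 0 \<le> \<Psi> x"
    and \<tau>: "\<And>j i. 1 < j \<Longrightarrow> i \<in> {1..j} \<Longrightarrow> \<tau> j i \<in> {node a b j (i - 1)..node a b j i}"
    and equicont: "\<And>e. e > 0 \<Longrightarrow> \<exists>\<delta>>0. \<forall>t\<in>A. \<forall>x\<in>{a..b}. \<forall>y\<in>{a..b}.
                     \<bar>x - y\<bar> < \<delta> \<longrightarrow> \<bar>F t x - F t y\<bar> \<le> e"
  shows "uniform_limit A (\<lambda>j t. \<Sum>i=1..j. cell_weight \<Psi> a b j i * F t (\<tau> j i))
           (\<lambda>t. LINT x:{a..b}|lborel. F t x * \<Psi> x) sequentially"
proof (rule uniform_limitI)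
  fix e :: real assume e: "e > 0"
  define W where "W = (LINT x:{a..b}|lborel. \<Psi> x)"
  have W: "0 \<le> W"
    unfolding W_def set_lebesgue_integral_def by (rule integral_nonneg_AE) (simp add: nonneg)
  define \<epsilon> where "\<epsilon> = e / (W + 1)"
  have \<epsilon>: "0 < \<epsilon>" "\<epsilon> * W < e"
    using e W by (auto simp: \<epsilon>_def field_simps)
  obtain \<delta> where \<delta>: "\<delta> > 0"
    and F\<delta>: "\<And>t x y. t \<in> A \<Longrightarrow> x \<in> {a..b} \<Longrightarrow> y \<in> {a..b} \<Longrightarrow> \<bar>x - y\<bar> < \<delta> \<Longrightarrow> \<bar>F t x - F t y\<bar> \<le> \<epsilon>"
    using equicont[OF \<epsilon>(1)] by blast
  have F\<Psi>: "set_integrable lborel {a..b} (\<lambda>x. F t x * \<Psi> x)" if t: "t \<in> A" for t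
  proof (rule set_integrable_continuous_mult[OF continuous_on_modulus \<Psi>])
    fix e' :: real assume "e' > 0"
    then obtain \<delta>' where "\<delta>' > 0"
      and "\<forall>t\<in>A. \<forall>x\<in>{a..b}. \<forall>y\<in>{a..b}. \<bar>x - y\<bar> < \<delta>' \<longrightarrow> \<bar>F t x - F t y\<bar> \<le> e'"
      using equicont by blast
    then show "\<exists>\<delta>>0. \<forall>x\<in>{a..b}. \<forall>y\<in>{a..b}. \<bar>x - y\<bar> < \<delta> \<longrightarrow> \<bar>F t x - F t y\<bar> \<le> e'"
      using t by blast
  qed
  have "\<forall>\<^sub>F j in sequentially. 1 < j" by (rule eventually_gt_at_top)
  moreover have "\<forall>\<^sub>F j in sequentially. (b - a) / real j < \<delta>"
    using lim_const_over_n \<delta> by (rule order_tendstoD)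
  ultimately show "\<forall>\<^sub>F j in sequentially. \<forall>t\<in>A. dist (\<Sum>i=1..j. cell_weight \<Psi> a b j i * F t (\<tau> j i))
               (LINT x:{a..b}|lborel. F t x * \<Psi> x) < e"
  proof eventually_elim
    case (elim j)
    let ?C = "\<lambda>i. {node a b j (i - 1)..node a b j i}"
    show ?case
    proof
      fix t assume t: "t \<in> A"
      have cell_error: "\<bar>cell_weight \<Psi> a b j i * F t (\<tau> j i) - (LINT x:?C i|lborel. F t x * \<Psi> x)\<bar>
          \<le> \<epsilon> * cell_weight \<Psi> a b j i" if i: "i \<in> {1..j}" for i
        unfolding cell_weight_def
      proof (rule set_integral_approx_const)
        have sub: "?C i \<subseteq> {a..b}" by (rule cell_subset[OF ab i])
        show "set_integrable lborel (?C i) (\<lambda>x. F t x * \<Psi> x)" "set_integrable lborel (?C i) \<Psi>"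
          by (rule set_integrable_subset[OF _ _ sub]; simp add: F\<Psi>[OF t] \<Psi>)+
        fix x assume x: "x \<in> ?C i"
        have "\<tau> j i \<in> ?C i" using \<tau>[OF elim(1) i] .
        moreover from this have "\<bar>\<tau> j i - x\<bar> < \<delta>"
          using x node_diff[of i a b j] i elim(2) by auto
        ultimately show "\<bar>F t (\<tau> j i) - F t x\<bar> \<le> \<epsilon>"
          using F\<delta> t sub x by blast
      qed (rule nonneg)
      have "\<bar>(\<Sum>i=1..j. cell_weight \<Psi> a b j i * F t (\<tau> j i)) - (LINT x:{a..b}|lborel. F t x * \<Psi> x)\<bar>
          = \<bar>\<Sum>i=1..j. cell_weight \<Psi> a b j i * F t (\<tau> j i) - (LINT x:?C i|lborel. F t x * \<Psi> x)\<bar>"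
        using set_integral_sum_cells[OF F\<Psi>[OF t] ab, of j] elim(1) by (simp add: sum_subtractf)
      also have "\<dots> \<le> (\<Sum>i=1..j. \<epsilon> * cell_weight \<Psi> a b j i)"
        by (rule order.trans[OF sum_abs sum_mono]) (rule cell_error)
      also have "\<dots> = \<epsilon> * W"
        using sum_cell_weight[OF \<Psi> ab, of j] elim(1) by (simp add: W_def sum_distrib_left[symmetric])
      finally show "dist (\<Sum>i=1..j. cell_weight \<Psi> a b j i * F t (\<tau> j i))
               (LINT x:{a..b}|lborel. F t x * \<Psi> x) < e"
        using \<epsilon>(2) by (simp add: dist_real_def)
    qed
  qed
qed

lemma riemann_sum_first_moment:
  assumes \<Psi>: "pdf_supported \<Psi> a b" and ab: "0 \<le> a" "a \<le> b"
    and \<tau>: "\<And>j i. 1 < j \<Longrightarrow> i \<in> {1..j} \<Longrightarrow> \<tau> j i \<in> {node a b j (i - 1)..node a b j i}"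
  shows "(\<lambda>j. \<Sum>i=1..j. cell_weight \<Psi> a b j i * \<tau> j i) \<longlonglongrightarrow> (LINT x:{a..b}|lborel. \<Psi> x * x)"
proof -
  have "uniform_limit {()} (\<lambda>j _. \<Sum>i=1..j. cell_weight \<Psi> a b j i * \<tau> j i)
      (\<lambda>_. LINT x:{a..b}|lborel. x * \<Psi> x) sequentially"
  proof (rule riemann_sum_uniform_limit[OF ab(2) pdf_supported_integrable[OF \<Psi> ab(1)]
        pdf_supported_nonneg[OF \<Psi>] \<tau>])
    show "\<exists>\<delta>>0. \<forall>t\<in>{()}. \<forall>x\<in>{a..b}. \<forall>y\<in>{a..b}. \<bar>x - y\<bar> < \<delta> \<longrightarrow> \<bar>x - y\<bar> \<le> e"
      if "e > 0" for e
      using that by (intro exI[of _ e]) auto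
  qed
  then show ?thesis by (simp add: mult.commute)
qed

definition delay_integral :: "(real \<Rightarrow> real) \<Rightarrow> (real \<Rightarrow> real) \<Rightarrow> real \<Rightarrow> real" where
  "delay_integral \<Psi> f = (\<lambda>t. LINT s:{0..}|lborel. f (t - s) * \<Psi> s)"

definition delay_sum ::
    "(real \<Rightarrow> real) \<Rightarrow> real \<Rightarrow> real \<Rightarrow> nat \<Rightarrow> (nat \<Rightarrow> real) \<Rightarrow> (real \<Rightarrow> real) \<Rightarrow> real \<Rightarrow> real" where
  "delay_sum \<Psi> a b j \<tau> f = (\<lambda>t. \<Sum>i=1..j. cell_weight \<Psi> a b j i * f (t - \<tau> i))"

lemma abs_weighted_sum_le:
  fixes w x :: "'a \<Rightarrow> real"
  assumes "\<And>i. i \<in> A \<Longrightarrow> 0 \<le> w i" "\<And>i. i \<in> A \<Longrightarrow> \<bar>x i\<bar> \<le> \<epsilon>"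
  shows "\<bar>\<Sum>i\<in>A. w i * x i\<bar> \<le> \<epsilon> * (\<Sum>i\<in>A. w i)"
proof -
  have "\<bar>\<Sum>i\<in>A. w i * x i\<bar> \<le> (\<Sum>i\<in>A. w i * \<epsilon>)"
    using assms by (intro order.trans[OF sum_abs sum_mono]) (simp add: abs_mult mult_left_mono)
  then show ?thesis by (simp add: sum_distrib_left mult.commute)
qed

lemma delay_sum_continuous_uniform_limit:
  fixes \<Psi> g :: "real \<Rightarrow> real" and \<tau> :: "nat \<Rightarrow> nat \<Rightarrow> real"
  assumes \<Psi>: "pdf_supported \<Psi> \<theta> Lb" and \<theta>: "0 \<le> \<theta>" "\<theta> \<le> Lb"
    and \<tau>: "\<And>j i. 1 < j \<Longrightarrow> i \<in> {1..j} \<Longrightarrow> \<tau> j i \<in> {node \<theta> Lb j (i - 1)..node \<theta> Lb j i}"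
    and g: "continuous_on {a - Lb..b - \<theta>} g"
  shows "uniform_limit {a..b} (\<lambda>j. delay_sum \<Psi> \<theta> Lb j (\<tau> j) g) (delay_integral \<Psi> g) sequentially"
proof -
  have "uniform_limit {a..b} (\<lambda>j t. \<Sum>i=1..j. cell_weight \<Psi> \<theta> Lb j i * g (t - \<tau> j i))
      (\<lambda>t. LINT x:{\<theta>..Lb}|lborel. g (t - x) * \<Psi> x) sequentially"
  proof (rule riemann_sum_uniform_limit[OF \<theta>(2) pdf_supported_integrable[OF \<Psi> \<theta>(1)]
        pdf_supported_nonneg[OF \<Psi>] \<tau>])
    fix e :: real assume "e > 0"
    then obtain d where "d > 0"
      and d: "\<forall>x\<in>{a - Lb..b - \<theta>}. \<forall>x'\<in>{a - Lb..b - \<theta>}. dist x' x < d \<longrightarrow> dist (g x') (g x) < e"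
      using compact_uniformly_continuous[OF g compact_Icc] unfolding uniformly_continuous_on_def by blast
    show "\<exists>\<delta>>0. \<forall>t\<in>{a..b}. \<forall>x\<in>{\<theta>..Lb}. \<forall>y\<in>{\<theta>..Lb}. \<bar>x - y\<bar> < \<delta> \<longrightarrow> \<bar>g (t - x) - g (t - y)\<bar> \<le> e"
    proof (intro exI[of _ d] conjI ballI impI)
      fix t x y assume t: "t \<in> {a..b}" and xy: "x \<in> {\<theta>..Lb}" "y \<in> {\<theta>..Lb}" "\<bar>x - y\<bar> < d"
      then have "t - x \<in> {a - Lb..b - \<theta>}" "t - y \<in> {a - Lb..b - \<theta>}" "dist (t - x) (t - y) < d"
        by (auto simp: dist_real_def abs_minus_commute)
      then have "dist (g (t - x)) (g (t - y)) < e" using d by blast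
      then show "\<bar>g (t - x) - g (t - y)\<bar> \<le> e" by (simp add: dist_real_def)
    qed (rule \<open>d > 0\<close>)
  qed
  then show ?thesis
    unfolding delay_sum_def delay_integral_def pdf_supported_set_integral[OF \<Psi> \<theta>(1)] .
qed

lemma delay_sum_perturbation:
  fixes \<Psi> g :: "real \<Rightarrow> real" and G :: "nat \<Rightarrow> real \<Rightarrow> real" and \<tau> :: "nat \<Rightarrow> nat \<Rightarrow> real"
  assumes \<Psi>: "pdf_supported \<Psi> \<theta> Lb" and \<theta>: "0 \<le> \<theta>" "\<theta> \<le> Lb"
    and \<tau>: "\<And>j i. 1 < j \<Longrightarrow> i \<in> {1..j} \<Longrightarrow> \<tau> j i \<in> {node \<theta> Lb j (i - 1)..node \<theta> Lb j i}"
    and G: "uniform_limit {a - Lb..b - \<theta>} G g sequentially"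
  shows "uniform_limit {a..b}
    (\<lambda>j t. delay_sum \<Psi> \<theta> Lb j (\<tau> j) (G j) t - delay_sum \<Psi> \<theta> Lb j (\<tau> j) g t) (\<lambda>_. 0) sequentially"
proof (rule uniform_limitI)
  fix e :: real assume e: "e > 0"
  define W where "W = (LINT x:{\<theta>..Lb}|lborel. \<Psi> x)"
  have W: "0 \<le> W"
    unfolding W_def set_lebesgue_integral_def
    by (rule integral_nonneg_AE) (simp add: pdf_supported_nonneg[OF \<Psi>])
  define \<epsilon> where "\<epsilon> = e / (W + 1)"
  have \<epsilon>: "0 < \<epsilon>" "\<epsilon> * W < e"
    using e W by (auto simp: \<epsilon>_def field_simps)
  have "\<forall>\<^sub>F j in sequentially. 1 < j" by (rule eventually_gt_at_top)
  with uniform_limitD[OF G \<epsilon>(1)]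
  show "\<forall>\<^sub>F j in sequentially. \<forall>t\<in>{a..b}.
      dist (delay_sum \<Psi> \<theta> Lb j (\<tau> j) (G j) t - delay_sum \<Psi> \<theta> Lb j (\<tau> j) g t) 0 < e"
  proof eventually_elim
    case (elim j)
    show ?case
    proof
      fix t assume t: "t \<in> {a..b}"
      have "\<bar>G j (t - \<tau> j i) - g (t - \<tau> j i)\<bar> \<le> \<epsilon>" if i: "i \<in> {1..j}" for i
      proof -
        have "\<tau> j i \<in> {\<theta>..Lb}" using \<tau>[OF elim(2) i] cell_subset[OF \<theta>(2) i] by blast
        then have "t - \<tau> j i \<in> {a - Lb..b - \<theta>}" using t by auto
        then show ?thesis using elim(1) by (fastforce simp: dist_real_def)
      qed
      then have "\<bar>\<Sum>i=1..j. cell_weight \<Psi> \<theta> Lb j i * (G j (t - \<tau> j i) - g (t - \<tau> j i))\<bar>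
          \<le> \<epsilon> * (\<Sum>i=1..j. cell_weight \<Psi> \<theta> Lb j i)"
        by (intro abs_weighted_sum_le cell_weight_nonneg pdf_supported_nonneg[OF \<Psi>])
      also have "\<dots> = \<epsilon> * W"
        using sum_cell_weight[OF pdf_supported_integrable[OF \<Psi> \<theta>(1)] \<theta>(2), of j] elim(2)
        by (simp add: W_def)
      finally have "\<bar>\<Sum>i=1..j. cell_weight \<Psi> \<theta> Lb j i * (G j (t - \<tau> j i) - g (t - \<tau> j i))\<bar> \<le> \<epsilon> * W" .
      then show "dist (delay_sum \<Psi> \<theta> Lb j (\<tau> j) (G j) t - delay_sum \<Psi> \<theta> Lb j (\<tau> j) g t) 0 < e"
        using \<epsilon>(2) by (simp add: delay_sum_def dist_real_def sum_subtractf right_diff_distrib)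
    qed
  qed
qed

lemma delay_sum_uniform_limit:
  fixes \<Psi> g :: "real \<Rightarrow> real" and G :: "nat \<Rightarrow> real \<Rightarrow> real" and \<tau> :: "nat \<Rightarrow> nat \<Rightarrow> real"
  assumes \<Psi>: "pdf_supported \<Psi> \<theta> Lb" and \<theta>: "0 \<le> \<theta>" "\<theta> \<le> Lb"
    and \<tau>: "\<And>j i. 1 < j \<Longrightarrow> i \<in> {1..j} \<Longrightarrow> \<tau> j i \<in> {node \<theta> Lb j (i - 1)..node \<theta> Lb j i}"
    and G: "uniform_limit {lo..hi} G g sequentially" and g: "continuous_on {lo..hi} g"
    and lo: "lo \<le> a - Lb" and hi: "b - \<theta> \<le> hi"
  shows "uniform_limit {a..b} (\<lambda>j. delay_sum \<Psi> \<theta> Lb j (\<tau> j) (G j)) (delay_integral \<Psi> g) sequentially"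
proof -
  have sub: "{a - Lb..b - \<theta>} \<subseteq> {lo..hi}" using lo hi by auto
  from uniform_limit_add[OF delay_sum_perturbation[OF \<Psi> \<theta> \<tau> uniform_limit_on_subset[OF G sub]]
      delay_sum_continuous_uniform_limit[OF \<Psi> \<theta> \<tau> continuous_on_subset[OF g sub]]]
  show ?thesis by simp
qed

section \<open>Linear differential equations with small forcing\<close>

lemma uniform_limit_iff_diff_zero:
  fixes f :: "'a \<Rightarrow> 'b \<Rightarrow> real"
  shows "uniform_limit A f g F \<longleftrightarrow> uniform_limit A (\<lambda>j t. f j t - g t) (\<lambda>_. 0) F"
  by (simp add: uniform_limit_iff dist_real_def)

lemma linear_ode_energy_ineq:
  fixes c d f K \<delta> :: real
  assumes c: "\<bar>c\<bar> \<le> K" and f: "\<bar>f\<bar> \<le> \<delta>"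
  shows "- (2 * K + 1) * d\<^sup>2 + 2 * d * (- c * d + f) \<le> \<delta>\<^sup>2"
proof -
  have "d * f \<le> \<bar>d\<bar> * \<bar>f\<bar>"
    by (simp add: abs_mult[symmetric])
  also have "\<dots> \<le> \<bar>d\<bar> * \<delta>"
    using f by (intro mult_left_mono) auto
  moreover have "- c * d\<^sup>2 \<le> K * d\<^sup>2"
    using c by (intro mult_right_mono) auto
  moreover have "2 * \<bar>d\<bar> * \<delta> \<le> d\<^sup>2 + \<delta>\<^sup>2"
    using sum_squares_bound[of "\<bar>d\<bar>" \<delta>] by (simp add: power2_abs)
  ultimately show ?thesis by (simp add: algebra_simps power2_eq_square)
qed

lemma linear_ode_error_bound:
  fixes d c f :: "real \<Rightarrow> real"
  assumes ab: "a \<le> b" and cont: "continuous_on {a..b} d"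
    and der: "\<And>t. t \<in> {a<..<b} \<Longrightarrow> (d has_real_derivative - c t * d t + f t) (at t)"
    and c: "\<And>t. t \<in> {a<..<b} \<Longrightarrow> \<bar>c t\<bar> \<le> K" and f: "\<And>t. t \<in> {a<..<b} \<Longrightarrow> \<bar>f t\<bar> \<le> \<delta>"
    and init: "\<bar>d a\<bar> \<le> \<delta>" and K: "0 \<le> K" and t: "t \<in> {a..b}"
  shows "(d t)\<^sup>2 \<le> exp ((2 * K + 1) * (b - a)) * (\<delta>\<^sup>2 * (1 + (b - a)))"
proof -
  define l where "l = 2 * K + 1"
  define \<phi> where "\<phi> x = exp (- l * (x - a)) * (d x)\<^sup>2 - \<delta>\<^sup>2 * (x - a)" for x
  \<comment> \<open>The forcing is absorbed by \<open>2 d f \<le> d\<^sup>2 + \<delta>\<^sup>2\<close>, so this weighted energy is nonincreasing.\<close>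
  have "\<phi> t \<le> \<phi> a"
  proof (rule DERIV_nonpos_imp_decreasing_open[of a t \<phi>])
    show "a \<le> t" using t by auto
    show "continuous_on {a..t} \<phi>"
      unfolding \<phi>_def using t by (intro continuous_intros continuous_on_subset[OF cont]) auto
    fix x assume "a < x" "x < t"
    then have x: "x \<in> {a<..<b}" using t by auto
    have "0 \<le> l * (x - a)" using \<open>a < x\<close> K by (simp add: l_def)
    then have E: "exp (- l * (x - a)) \<le> 1" by simp
    have "(\<phi> has_real_derivative
        exp (- l * (x - a)) * (- l * (d x)\<^sup>2 + 2 * d x * (- c x * d x + f x)) - \<delta>\<^sup>2) (at x)"
      unfolding \<phi>_def
      by (rule derivative_eq_intros der[OF x] refl | simp add: algebra_simps)+
    moreover have "exp (- l * (x - a)) * (- l * (d x)\<^sup>2 + 2 * d x * (- c x * d x + f x)) \<le> \<delta>\<^sup>2"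
      using linear_ode_energy_ineq[OF c[OF x] f[OF x], of "d x"] E
      by (intro order.trans[OF mult_left_mono mult_left_le_one_le]) (auto simp: l_def)
    ultimately show "\<exists>y. (\<phi> has_real_derivative y) (at x) \<and> y \<le> 0" by auto
  qed
  moreover have "(d a)\<^sup>2 \<le> \<delta>\<^sup>2" using init by (simp add: abs_le_square_iff[symmetric])
  ultimately have "exp (- l * (t - a)) * (d t)\<^sup>2 \<le> \<delta>\<^sup>2 + \<delta>\<^sup>2 * (t - a)"
    unfolding \<phi>_def by simp
  also have "\<dots> \<le> \<delta>\<^sup>2 * (1 + (b - a))"
    using t by (simp add: distrib_left mult_left_mono)
  finally have energy: "exp (- l * (t - a)) * (d t)\<^sup>2 \<le> \<delta>\<^sup>2 * (1 + (b - a))" .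
  have "(d t)\<^sup>2 = exp (l * (t - a)) * (exp (- l * (t - a)) * (d t)\<^sup>2)"
    by (simp add: mult.assoc[symmetric] exp_add[symmetric])
  also have "\<dots> \<le> exp (l * (t - a)) * (\<delta>\<^sup>2 * (1 + (b - a)))"
    using energy by (intro mult_left_mono) auto
  also have "\<dots> \<le> exp (l * (b - a)) * (\<delta>\<^sup>2 * (1 + (b - a)))"
    using t ab K by (intro mult_right_mono) (auto simp: l_def)
  finally show ?thesis unfolding l_def .
qed

lemma uniform_limit_linear_ode_error:
  fixes d c f :: "nat \<Rightarrow> real \<Rightarrow> real"
  assumes ab: "a \<le> b"
    and ode: "\<forall>\<^sub>F j in sequentially. continuous_on {a..b} (d j) \<and>
      (\<forall>t\<in>{a<..<b}. (d j has_real_derivative (- c j t * d j t + f j t)) (at t) \<and> \<bar>c j t\<bar> \<le> K)"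
    and init: "(\<lambda>j. d j a) \<longlonglongrightarrow> 0"
    and forcing: "uniform_limit {a<..<b} f (\<lambda>_. 0) sequentially"
  shows "uniform_limit {a..b} d (\<lambda>_. 0) sequentially"
proof (rule uniform_limitI)
  fix e :: real assume e: "e > 0"
  define C where "C = exp ((2 * \<bar>K\<bar> + 1) * (b - a)) * (1 + (b - a))"
  have C: "0 < C" unfolding C_def using ab by auto
  define \<delta> where "\<delta> = e / (2 * sqrt C)"
  have \<delta>: "0 < \<delta>" unfolding \<delta>_def using e C by auto
  have C\<delta>: "C * \<delta>\<^sup>2 < e\<^sup>2"
    using C e unfolding \<delta>_def by (simp add: power_divide power_mult_distrib field_simps)
  have "\<forall>\<^sub>F j in sequentially. dist (d j a) 0 < \<delta>"
    using init \<delta> by (rule tendstoD)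
  with ode uniform_limitD[OF forcing \<delta>]
  show "\<forall>\<^sub>F j in sequentially. \<forall>t\<in>{a..b}. dist (d j t) 0 < e"
  proof eventually_elim
    case (elim j)
    show ?case
    proof
      fix t assume t: "t \<in> {a..b}"
      have cK: "\<bar>c j s\<bar> \<le> \<bar>K\<bar>" if "s \<in> {a<..<b}" for s
        using elim that by force
      have "(d j t)\<^sup>2 \<le> exp ((2 * \<bar>K\<bar> + 1) * (b - a)) * (\<delta>\<^sup>2 * (1 + (b - a)))"
        by (rule linear_ode_error_bound[OF ab, of "d j" "c j" "f j" "\<bar>K\<bar>" \<delta> t])
           (use elim t cK in \<open>auto simp: dist_real_def less_imp_le\<close>)
      also have "\<dots> < e\<^sup>2" using C\<delta> unfolding C_def by (simp add: algebra_simps)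
      finally show "dist (d j t) 0 < e"
        using power2_less_imp_less[of "\<bar>d j t\<bar>" e] e by (simp add: dist_real_def)
    qed
  qed
qed

corollary uniform_limit_from_derivatives:
  fixes X F :: "nat \<Rightarrow> real \<Rightarrow> real"
  assumes ab: "a \<le> b"
    and X: "\<forall>\<^sub>F j in sequentially. continuous_on {a..b} (X j) \<and>
      (\<forall>t\<in>{a<..<b}. (X j has_real_derivative F j t) (at t))"
    and Y: "continuous_on {a..b} Y" "\<And>t. t \<in> {a<..<b} \<Longrightarrow> (Y has_real_derivative G t) (at t)"
    and init: "(\<lambda>j. X j a) \<longlonglongrightarrow> Y a"
    and forcing: "uniform_limit {a<..<b} F G sequentially"
  shows "uniform_limit {a..b} X Y sequentially"
proof (rule uniform_limit_iff_diff_zero[THEN iffD2],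
    rule uniform_limit_linear_ode_error[OF ab, where c = "\<lambda>_ _. 0" and K = 0])
  show "\<forall>\<^sub>F j in sequentially. continuous_on {a..b} (\<lambda>t. X j t - Y t) \<and>
      (\<forall>t\<in>{a<..<b}. ((\<lambda>t. X j t - Y t) has_real_derivative - 0 * (X j t - Y t) + (F j t - G t)) (at t)
        \<and> \<bar>0::real\<bar> \<le> 0)"
    using X
  proof eventually_elim
    case (elim j)
    then show ?case
      using Y by (auto intro!: continuous_on_diff DERIV_diff)
  qed
  show "(\<lambda>j. X j a - Y a) \<longlonglongrightarrow> 0" using init by (rule LIM_zero)
  show "uniform_limit {a<..<b} (\<lambda>j t. F j t - G t) (\<lambda>_. 0) sequentially"
    using forcing by (rule uniform_limit_iff_diff_zero[THEN iffD1])
qed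

section \<open>Convergence of the discretized delay system\<close>

lemma smooth_real_continuous: "smooth_real f \<Longrightarrow> continuous_on UNIV f"
  unfolding smooth_real_def
  by (metis continuous_at_imp_continuous_on differentiable_imp_continuous_within funpow_0)

lemma continuous_on_history:
  fixes f :: "real \<Rightarrow> 'a::topological_space"
  assumes "continuous_on {0..} f" "\<And>s. s \<le> 0 \<Longrightarrow> f s = c"
  shows "continuous_on UNIV f"
proof -
  have "continuous_on {..0} f"
    using assms(2) by (intro continuous_on_eq[OF continuous_on_const]) auto
  from continuous_on_closed_Un[OF closed_atMost closed_atLeast this assms(1)]
  have "continuous_on ({..0} \<union> {0..}) f" .
  moreover have "{..0} \<union> {0..} = (UNIV :: real set)" by auto
  ultimately show ?thesis by simp
qed

lemma bounded_image_Icc: "continuous_on UNIV f \<Longrightarrow> bounded (f ` {a..b})"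
  for f :: "real \<Rightarrow> real"
  by (intro compact_imp_bounded compact_continuous_image compact_Icc) (rule continuous_on_subset, auto)

lemma continuous_on_error:
  fixes X Y :: "real \<Rightarrow> real"
  assumes "continuous_on {0..} X" "continuous_on {0..} Y" "0 \<le> a"
  shows "continuous_on {a..b} (\<lambda>t. X t - Y t)"
proof -
  have "{a..b} \<subseteq> {0..}" using assms(3) by auto
  then show ?thesis
    using assms(1,2) by (intro continuous_on_diff) (auto elim: continuous_on_subset)
qed

lemma uniform_limit_eventually_bounded:
  fixes X :: "nat \<Rightarrow> real \<Rightarrow> real"
  assumes "uniform_limit A X Y sequentially" "bounded (Y ` A)"
  obtains K where "\<forall>\<^sub>F j in sequentially. \<forall>t\<in>A. \<bar>X j t\<bar> \<le> K"
proof -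
  obtain K where K: "\<forall>t\<in>A. \<bar>Y t\<bar> \<le> K"
    using assms(2) by (auto simp: bounded_iff)
  have "\<forall>\<^sub>F j in sequentially. \<forall>t\<in>A. \<bar>X j t\<bar> \<le> K + 1"
    using uniform_limitD[OF assms(1) zero_less_one]
  proof eventually_elim
    case (elim j)
    then show ?case
      using K by (force simp: dist_real_def)
  qed
  then show thesis by (rule that)
qed

locale delay_epidemic_discretization =
  fixes \<theta> Lb \<sigma> M p \<gamma> \<mu> cS cI :: real
    and \<beta> \<Psi> \<Phi> S L I RT RP :: "real \<Rightarrow> real"
    and Sj Lj Ij RTj RPj :: "nat \<Rightarrow> real \<Rightarrow> real"
    and \<rho> \<tau> :: "nat \<Rightarrow> nat \<Rightarrow> real"
  assumes bounds: "0 < \<theta>" "\<theta> < Lb" "0 < \<sigma>" "\<sigma> < M"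
    and \<beta>_continuous: "continuous_on UNIV \<beta>"
    and \<Psi>: "pdf_supported \<Psi> \<theta> Lb" and \<Phi>: "pdf_supported \<Phi> \<sigma> M"
    and continuous: "continuous_on {0..} S" "continuous_on {0..} L" "continuous_on {0..} I"
      "continuous_on {0..} RT" "continuous_on {0..} RP"
    and history: "\<And>s. s \<le> 0 \<Longrightarrow> S s = cS" "\<And>s. s \<le> 0 \<Longrightarrow> I s = cI"
    and ode_S: "\<And>t. 0 < t \<Longrightarrow>
      (S has_real_derivative - \<beta> t * I t * S t + p * \<gamma> * delay_integral \<Phi> I t) (at t)"
    and ode_L: "\<And>t. 0 < t \<Longrightarrow>
      (L has_real_derivative \<beta> t * I t * S t - delay_integral \<Psi> (\<lambda>s. \<beta> s * I s * S s) t) (at t)"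
    and ode_I: "\<And>t. 0 < t \<Longrightarrow>
      (I has_real_derivative delay_integral \<Psi> (\<lambda>s. \<beta> s * I s * S s) t - \<gamma> * I t - \<mu> * I t) (at t)"
    and ode_RT: "\<And>t. 0 < t \<Longrightarrow>
      (RT has_real_derivative p * \<gamma> * I t - p * \<gamma> * delay_integral \<Phi> I t) (at t)"
    and ode_RP: "\<And>t. 0 < t \<Longrightarrow> (RP has_real_derivative (1 - p) * \<gamma> * I t) (at t)"
    and \<rho>: "\<And>j i. 1 < j \<Longrightarrow> i \<in> {1..j} \<Longrightarrow> \<rho> j i \<in> {node \<sigma> M j (i - 1)..node \<sigma> M j i}"
    and \<tau>: "\<And>j i. 1 < j \<Longrightarrow> i \<in> {1..j} \<Longrightarrow> \<tau> j i \<in> {node \<theta> Lb j (i - 1)..node \<theta> Lb j i}"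
    and continuous_j: "\<And>j. 1 < j \<Longrightarrow> continuous_on {0..} (Sj j)" "\<And>j. 1 < j \<Longrightarrow> continuous_on {0..} (Lj j)"
      "\<And>j. 1 < j \<Longrightarrow> continuous_on {0..} (Ij j)" "\<And>j. 1 < j \<Longrightarrow> continuous_on {0..} (RTj j)"
      "\<And>j. 1 < j \<Longrightarrow> continuous_on {0..} (RPj j)"
    and history_j: "\<And>j s. 1 < j \<Longrightarrow> s \<le> 0 \<Longrightarrow> Sj j s = cS" "\<And>j s. 1 < j \<Longrightarrow> s \<le> 0 \<Longrightarrow> Ij j s = cI"
    and ode_Sj: "\<And>j t. 1 < j \<Longrightarrow> 0 < t \<Longrightarrow>
      (Sj j has_real_derivative - \<beta> t * Ij j t * Sj j t + p * \<gamma> * delay_sum \<Phi> \<sigma> M j (\<rho> j) (Ij j) t) (at t)"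
    and ode_Lj: "\<And>j t. 1 < j \<Longrightarrow> 0 < t \<Longrightarrow>
      (Lj j has_real_derivative
        \<beta> t * Ij j t * Sj j t - delay_sum \<Psi> \<theta> Lb j (\<tau> j) (\<lambda>s. \<beta> s * Ij j s * Sj j s) t) (at t)"
    and ode_Ij: "\<And>j t. 1 < j \<Longrightarrow> 0 < t \<Longrightarrow>
      (Ij j has_real_derivative
        delay_sum \<Psi> \<theta> Lb j (\<tau> j) (\<lambda>s. \<beta> s * Ij j s * Sj j s) t - \<gamma> * Ij j t - \<mu> * Ij j t) (at t)"
    and ode_RTj: "\<And>j t. 1 < j \<Longrightarrow> 0 < t \<Longrightarrow>
      (RTj j has_real_derivative p * \<gamma> * Ij j t - p * \<gamma> * delay_sum \<Phi> \<sigma> M j (\<rho> j) (Ij j) t) (at t)"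
    and ode_RPj: "\<And>j t. 1 < j \<Longrightarrow> 0 < t \<Longrightarrow> (RPj j has_real_derivative (1 - p) * \<gamma> * Ij j t) (at t)"
begin

lemma S_continuous: "continuous_on UNIV S"
  using continuous(1) history(1) by (rule continuous_on_history)

lemma I_continuous: "continuous_on UNIV I"
  using continuous(3) history(2) by (rule continuous_on_history)

lemma incidence_continuous: "continuous_on UNIV (\<lambda>s. \<beta> s * I s * S s)"
  by (intro continuous_on_mult \<beta>_continuous I_continuous S_continuous)

lemma incidence_uniform_limit:
  assumes "uniform_limit {a..b} Sj S sequentially" "uniform_limit {a..b} Ij I sequentially"
  shows "uniform_limit {a..b} (\<lambda>j s. \<beta> s * Ij j s * Sj j s) (\<lambda>s. \<beta> s * I s * S s) sequentially"
  by (intro uniform_lim_mult uniform_limit_const assms bounded_image_Icc continuous_on_mult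
      \<beta>_continuous I_continuous S_continuous)

lemma infection_delay_uniform_limit:
  assumes "uniform_limit {lo..hi} Sj S sequentially" "uniform_limit {lo..hi} Ij I sequentially"
    and "lo \<le> a - Lb" "b - \<theta> \<le> hi"
  shows "uniform_limit {a..b} (\<lambda>j. delay_sum \<Psi> \<theta> Lb j (\<tau> j) (\<lambda>s. \<beta> s * Ij j s * Sj j s))
      (delay_integral \<Psi> (\<lambda>s. \<beta> s * I s * S s)) sequentially"
  using bounds(1,2) assms(3,4)
  by (intro delay_sum_uniform_limit[OF \<Psi> _ _ \<tau> incidence_uniform_limit[OF assms(1,2)]]
      continuous_on_subset[OF incidence_continuous]) auto

lemma recovery_delay_uniform_limit:
  assumes "uniform_limit {lo..hi} Ij I sequentially" "lo \<le> a - M" "b - \<sigma> \<le> hi"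
  shows "uniform_limit {a..b} (\<lambda>j. delay_sum \<Phi> \<sigma> M j (\<rho> j) (Ij j)) (delay_integral \<Phi> I) sequentially"
  using bounds(3,4) assms(2,3)
  by (intro delay_sum_uniform_limit[OF \<Phi> _ _ \<rho> assms(1)] continuous_on_subset[OF I_continuous]) auto

lemma I_error_derivative:
  assumes "1 < j" "0 < t"
  shows "((\<lambda>t. Ij j t - I t) has_real_derivative - (\<gamma> + \<mu>) * (Ij j t - I t) +
      (delay_sum \<Psi> \<theta> Lb j (\<tau> j) (\<lambda>s. \<beta> s * Ij j s * Sj j s) t
        - delay_integral \<Psi> (\<lambda>s. \<beta> s * I s * S s) t)) (at t)"
  using DERIV_diff[OF ode_Ij[OF assms] ode_I[OF assms(2)]] by (rule DERIV_cong) (simp add: algebra_simps)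

lemma S_error_derivative:
  assumes "1 < j" "0 < t"
  shows "((\<lambda>t. Sj j t - S t) has_real_derivative - (\<beta> t * Ij j t) * (Sj j t - S t) +
      ((p * \<gamma> * delay_sum \<Phi> \<sigma> M j (\<rho> j) (Ij j) t - \<beta> t * Ij j t * S t)
        - (p * \<gamma> * delay_integral \<Phi> I t - \<beta> t * I t * S t))) (at t)"
  using DERIV_diff[OF ode_Sj[OF assms] ode_S[OF assms(2)]] by (rule DERIV_cong) (simp add: algebra_simps)

lemma I_uniform_limit_step:
  assumes S: "uniform_limit {lo..a} Sj S sequentially" and I: "uniform_limit {lo..a} Ij I sequentially"
    and lo: "lo \<le> a - Lb" and ab: "0 \<le> a" "a \<le> b" "b \<le> a + \<theta>"
  shows "uniform_limit {a..b} Ij I sequentially"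
proof (rule uniform_limit_iff_diff_zero[THEN iffD2],
    rule uniform_limit_linear_ode_error[OF ab(2), where c = "\<lambda>_ _. \<gamma> + \<mu>" and K = "\<bar>\<gamma> + \<mu>\<bar>"])
  have "\<forall>\<^sub>F j in sequentially. 1 < j" by (rule eventually_gt_at_top)
  then show "\<forall>\<^sub>F j in sequentially. continuous_on {a..b} (\<lambda>t. Ij j t - I t) \<and>
      (\<forall>t\<in>{a<..<b}. ((\<lambda>t. Ij j t - I t) has_real_derivative - (\<gamma> + \<mu>) * (Ij j t - I t) +
        (delay_sum \<Psi> \<theta> Lb j (\<tau> j) (\<lambda>s. \<beta> s * Ij j s * Sj j s) t
          - delay_integral \<Psi> (\<lambda>s. \<beta> s * I s * S s) t)) (at t) \<and> \<bar>\<gamma> + \<mu>\<bar> \<le> \<bar>\<gamma> + \<mu>\<bar>)"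
  proof eventually_elim
    case (elim j)
    then show ?case
      using continuous_on_error[OF continuous_j(3) continuous(3) ab(1)] I_error_derivative[OF elim] ab(1)
      by auto
  qed
  show "(\<lambda>j. Ij j a - I a) \<longlonglongrightarrow> 0"
    using uniform_limit_on_subset[OF I, of "{a}"] lo bounds by (intro LIM_zero) simp
  have "uniform_limit {a..b} (\<lambda>j t. delay_sum \<Psi> \<theta> Lb j (\<tau> j) (\<lambda>s. \<beta> s * Ij j s * Sj j s) t
      - delay_integral \<Psi> (\<lambda>s. \<beta> s * I s * S s) t) (\<lambda>_. 0) sequentially"
    using infection_delay_uniform_limit[OF S I lo, of b] ab by (simp add: uniform_limit_iff_diff_zero[symmetric])
  then show "uniform_limit {a<..<b} (\<lambda>j t. delay_sum \<Psi> \<theta> Lb j (\<tau> j) (\<lambda>s. \<beta> s * Ij j s * Sj j s) t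
      - delay_integral \<Psi> (\<lambda>s. \<beta> s * I s * S s) t) (\<lambda>_. 0) sequentially"
    by (rule uniform_limit_on_subset) auto
qed

lemma susceptible_forcing_uniform_limit:
  assumes I: "uniform_limit {lo..b} Ij I sequentially" and lo: "lo \<le> a - M"
  shows "uniform_limit {a..b} (\<lambda>j t. p * \<gamma> * delay_sum \<Phi> \<sigma> M j (\<rho> j) (Ij j) t - \<beta> t * Ij j t * S t)
      (\<lambda>t. p * \<gamma> * delay_integral \<Phi> I t - \<beta> t * I t * S t) sequentially"
  using bounds(3,4) lo
  by (intro uniform_limit_minus bounded_linear.uniform_limit[OF bounded_linear_mult_right]
      recovery_delay_uniform_limit[OF I lo] uniform_lim_mult uniform_limit_const
      uniform_limit_on_subset[OF I] bounded_image_Icc continuous_on_mult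
      \<beta>_continuous I_continuous S_continuous) auto

lemma S_uniform_limit_step:
  assumes S: "(\<lambda>j. Sj j a) \<longlonglongrightarrow> S a" and I: "uniform_limit {lo..b} Ij I sequentially"
    and lo: "lo \<le> a - M" and ab: "0 \<le> a" "a \<le> b"
  shows "uniform_limit {a..b} Sj S sequentially"
proof -
  have I_ab: "uniform_limit {a..b} Ij I sequentially"
    using uniform_limit_on_subset[OF I] lo bounds by auto
  obtain KI where KI: "\<forall>\<^sub>F j in sequentially. \<forall>t\<in>{a..b}. \<bar>Ij j t\<bar> \<le> KI"
    using uniform_limit_eventually_bounded[OF I_ab bounded_image_Icc[OF I_continuous]] .
  obtain K\<beta> where K\<beta>: "\<forall>t\<in>{a..b}. \<bar>\<beta> t\<bar> \<le> K\<beta>"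
    using bounded_image_Icc[OF \<beta>_continuous, of a b] by (auto simp: bounded_iff)
  define f where "f j t = (p * \<gamma> * delay_sum \<Phi> \<sigma> M j (\<rho> j) (Ij j) t - \<beta> t * Ij j t * S t)
    - (p * \<gamma> * delay_integral \<Phi> I t - \<beta> t * I t * S t)" for j t
  have forcing: "uniform_limit {a<..<b} f (\<lambda>_. 0) sequentially"
    unfolding f_def
    by (rule uniform_limit_on_subset[OF susceptible_forcing_uniform_limit[OF I lo,
        THEN uniform_limit_iff_diff_zero[THEN iffD1]]]) auto
  show ?thesis
  proof (rule uniform_limit_iff_diff_zero[THEN iffD2], rule uniform_limit_linear_ode_error[OF ab(2) _ _ forcing,
        where c = "\<lambda>j t. \<beta> t * Ij j t" and K = "K\<beta> * KI"])
    have "\<forall>\<^sub>F j in sequentially. 1 < j" by (rule eventually_gt_at_top)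
    with KI show "\<forall>\<^sub>F j in sequentially. continuous_on {a..b} (\<lambda>t. Sj j t - S t) \<and>
        (\<forall>t\<in>{a<..<b}. ((\<lambda>t. Sj j t - S t) has_real_derivative
          - (\<beta> t * Ij j t) * (Sj j t - S t) + f j t) (at t) \<and> \<bar>\<beta> t * Ij j t\<bar> \<le> K\<beta> * KI)"
    proof eventually_elim
      case (elim j)
      have "\<bar>\<beta> t * Ij j t\<bar> \<le> K\<beta> * KI" if "t \<in> {a..b}" for t
        unfolding abs_mult using K\<beta> elim(1) that by (intro mult_mono) auto
      then show ?case
        using continuous_on_error[OF continuous_j(1)[OF elim(2)] continuous(1) ab(1)]
          S_error_derivative[OF elim(2)] ab(1)
        unfolding f_def by auto
    qed
    show "(\<lambda>j. Sj j a - S a) \<longlonglongrightarrow> 0"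
      using S by (rule LIM_zero)
  qed
qed

lemma S_I_uniform_limit_steps:
  defines "lo \<equiv> - (Lb + M)"
  shows "uniform_limit {lo..real k * min \<theta> \<sigma>} Sj S sequentially \<and>
    uniform_limit {lo..real k * min \<theta> \<sigma>} Ij I sequentially"
proof (induction k)
  case 0
  have J: "\<forall>\<^sub>F j in sequentially. 1 < j" by (rule eventually_gt_at_top)
  have "\<forall>\<^sub>F j in sequentially. \<forall>t\<in>{lo..0}. Sj j t = S t"
    using J by (rule eventually_mono) (simp add: history history_j)
  moreover have "\<forall>\<^sub>F j in sequentially. \<forall>t\<in>{lo..0}. Ij j t = I t"
    using J by (rule eventually_mono) (simp add: history history_j)
  ultimately show ?case
    by (auto intro!: uniform_limit_cong[THEN iffD2, OF _ _ uniform_limit_const])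
next
  case (Suc k)
  define a where "a = real k * min \<theta> \<sigma>"
  define b where "b = real (Suc k) * min \<theta> \<sigma>"
  have "0 \<le> a" "b = a + min \<theta> \<sigma>"
    using bounds by (simp_all add: a_def b_def algebra_simps)
  then have ab: "0 \<le> a" "a \<le> b" "b \<le> a + \<theta>" and lo: "lo \<le> a - Lb" "lo \<le> a - M"
    using bounds by (auto simp: lo_def)
  have S: "uniform_limit {lo..a} Sj S sequentially" and I: "uniform_limit {lo..a} Ij I sequentially"
    using Suc.IH by (auto simp: a_def)
  have "{lo..a} \<union> {a..b} = {lo..b}" using ab lo bounds by auto
  then have I': "uniform_limit {lo..b} Ij I sequentially"
    using uniform_limit_on_Un[OF I I_uniform_limit_step[OF S I lo(1) ab]] by simp
  have "(\<lambda>j. Sj j a) \<longlonglongrightarrow> S a"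
    using uniform_limit_on_subset[OF S, of "{a}"] lo bounds by simp
  from uniform_limit_on_Un[OF S S_uniform_limit_step[OF this I' lo(2) ab(1,2)]]
  have "uniform_limit {lo..b} Sj S sequentially"
    using \<open>{lo..a} \<union> {a..b} = {lo..b}\<close> by simp
  with I' show ?case by (simp add: b_def)
qed

lemma S_I_uniform_limit:
  "uniform_limit {- (Lb + M)..T} Sj S sequentially" "uniform_limit {- (Lb + M)..T} Ij I sequentially"
proof -
  obtain k :: nat where "T / min \<theta> \<sigma> \<le> k" using real_arch_simple by blast
  then have "T \<le> real k * min \<theta> \<sigma>" using bounds by (simp add: pos_divide_le_eq)
  then show "uniform_limit {- (Lb + M)..T} Sj S sequentially" "uniform_limit {- (Lb + M)..T} Ij I sequentially"
    using S_I_uniform_limit_steps[of k] by (auto elim: uniform_limit_on_subset)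
qed

lemma S_I_uniform_limit_nonneg:
  assumes "0 \<le> T"
  shows "uniform_limit {0..T} Sj S sequentially" "uniform_limit {0..T} Ij I sequentially"
  using bounds by (auto intro: uniform_limit_on_subset[OF S_I_uniform_limit(1)[of T]]
      uniform_limit_on_subset[OF S_I_uniform_limit(2)[of T]])

lemma L_uniform_limit:
  assumes init: "(\<lambda>j. Lj j 0) \<longlonglongrightarrow> L 0" and T: "0 \<le> T"
  shows "uniform_limit {0..T} Lj L sequentially"
proof (rule uniform_limit_from_derivatives[OF T, where X = Lj and Y = L])
  have "\<forall>\<^sub>F j in sequentially. 1 < j" by (rule eventually_gt_at_top)
  then show "\<forall>\<^sub>F j in sequentially. continuous_on {0..T} (Lj j) \<and> (\<forall>t\<in>{0<..<T}. (Lj j has_real_derivative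
      \<beta> t * Ij j t * Sj j t - delay_sum \<Psi> \<theta> Lb j (\<tau> j) (\<lambda>s. \<beta> s * Ij j s * Sj j s) t) (at t))"
    by (rule eventually_mono) (auto intro: continuous_on_subset[OF continuous_j(2)] ode_Lj)
  show "uniform_limit {0<..<T} (\<lambda>j t. \<beta> t * Ij j t * Sj j t - delay_sum \<Psi> \<theta> Lb j (\<tau> j) (\<lambda>s. \<beta> s * Ij j s * Sj j s) t)
      (\<lambda>t. \<beta> t * I t * S t - delay_integral \<Psi> (\<lambda>s. \<beta> s * I s * S s) t) sequentially"
    using bounds
    by (intro uniform_limit_on_subset[OF uniform_limit_minus[OF
          incidence_uniform_limit[OF S_I_uniform_limit_nonneg[OF T]]
          infection_delay_uniform_limit[OF S_I_uniform_limit]]]) auto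
qed (use init continuous(2) ode_L in \<open>auto elim: continuous_on_subset\<close>)

lemma RT_uniform_limit:
  assumes init: "(\<lambda>j. RTj j 0) \<longlonglongrightarrow> RT 0" and T: "0 \<le> T"
  shows "uniform_limit {0..T} RTj RT sequentially"
proof (rule uniform_limit_from_derivatives[OF T, where X = RTj and Y = RT])
  have "\<forall>\<^sub>F j in sequentially. 1 < j" by (rule eventually_gt_at_top)
  then show "\<forall>\<^sub>F j in sequentially. continuous_on {0..T} (RTj j) \<and> (\<forall>t\<in>{0<..<T}. (RTj j has_real_derivative
      p * \<gamma> * Ij j t - p * \<gamma> * delay_sum \<Phi> \<sigma> M j (\<rho> j) (Ij j) t) (at t))"
    by (rule eventually_mono) (auto intro: continuous_on_subset[OF continuous_j(4)] ode_RTj)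
  have "uniform_limit {0..T} (\<lambda>j. delay_sum \<Phi> \<sigma> M j (\<rho> j) (Ij j)) (delay_integral \<Phi> I) sequentially"
    by (rule recovery_delay_uniform_limit[OF S_I_uniform_limit(2)[of T]]) (use bounds in auto)
  then have "uniform_limit {0..T} (\<lambda>j t. p * \<gamma> * Ij j t - p * \<gamma> * delay_sum \<Phi> \<sigma> M j (\<rho> j) (Ij j) t)
      (\<lambda>t. p * \<gamma> * I t - p * \<gamma> * delay_integral \<Phi> I t) sequentially"
    by (intro uniform_limit_minus bounded_linear.uniform_limit[OF bounded_linear_mult_right]
        S_I_uniform_limit_nonneg(2)[OF T])
  then show "uniform_limit {0<..<T} (\<lambda>j t. p * \<gamma> * Ij j t - p * \<gamma> * delay_sum \<Phi> \<sigma> M j (\<rho> j) (Ij j) t)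
      (\<lambda>t. p * \<gamma> * I t - p * \<gamma> * delay_integral \<Phi> I t) sequentially"
    by (rule uniform_limit_on_subset) auto
qed (use init continuous(4) ode_RT in \<open>auto elim: continuous_on_subset\<close>)

lemma RP_uniform_limit:
  assumes init: "(\<lambda>j. RPj j 0) \<longlonglongrightarrow> RP 0" and T: "0 \<le> T"
  shows "uniform_limit {0..T} RPj RP sequentially"
proof (rule uniform_limit_from_derivatives[OF T, where X = RPj and Y = RP])
  have "\<forall>\<^sub>F j in sequentially. 1 < j" by (rule eventually_gt_at_top)
  then show "\<forall>\<^sub>F j in sequentially. continuous_on {0..T} (RPj j) \<and>
      (\<forall>t\<in>{0<..<T}. (RPj j has_real_derivative (1 - p) * \<gamma> * Ij j t) (at t))"
    by (rule eventually_mono) (auto intro: continuous_on_subset[OF continuous_j(5)] ode_RPj)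
  show "uniform_limit {0<..<T} (\<lambda>j t. (1 - p) * \<gamma> * Ij j t) (\<lambda>t. (1 - p) * \<gamma> * I t) sequentially"
    by (intro uniform_limit_on_subset[OF bounded_linear.uniform_limit[OF bounded_linear_mult_right
          S_I_uniform_limit_nonneg(2)[OF T]]]) auto
qed (use init continuous(5) ode_RP in \<open>auto elim: continuous_on_subset\<close>)

end

theorem theorem1:
  fixes \<theta> Lb \<sigma> M p \<gamma> \<mu> \<beta>\<^sub>0 cS cI d0 :: real
    and \<beta> \<Psi> \<Phi> :: "real \<Rightarrow> real"
    and S L I RT RP D :: "real \<Rightarrow> real"
    and Sj Lj Ij RTj RPj Dj :: "nat \<Rightarrow> real \<Rightarrow> real"
    and \<rho> \<tau> :: "nat \<Rightarrow> nat \<Rightarrow> real"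
  assumes bounds: "0 < \<theta>" "\<theta> < Lb" "0 < \<sigma>" "\<sigma> < M"
    and nonneg: "0 \<le> p" "0 \<le> \<gamma>" "0 \<le> \<mu>" "0 \<le> \<beta>\<^sub>0"
    and cpos: "0 < cS" "0 < cI"
    and beta: "\<forall>x. 0 \<le> \<beta> x" "smooth_real \<beta>"
    and Psi: "pdf_supported \<Psi> \<theta> Lb"
    and Phi: "pdf_supported \<Phi> \<sigma> M"
    \<comment> \<open>continuous system\<close>
    and cont: "continuous_on {0..} S" "continuous_on {0..} L" "continuous_on {0..} I"
              "continuous_on {0..} RT" "continuous_on {0..} RP" "continuous_on {0..} D"
    and hist: "\<forall>s\<le>0. S s = cS" "\<forall>s\<le>0. I s = cI"
    and init: "L 0 = \<beta>\<^sub>0 * cI * cS * (LINT \<tau>:{\<theta>..Lb}|lborel. \<Psi> \<tau> * \<tau>)"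
              "RT 0 = cI * p * \<gamma> * (LINT \<rho>:{\<sigma>..M}|lborel. \<Phi> \<rho> * \<rho>)"
              "RP 0 = (1 - p) * \<gamma> * cI * (LINT \<tau>:{\<theta>..Lb}|lborel. \<Psi> \<tau> * \<tau>)"
              "D 0 = d0"
    and ode: "\<forall>t>0.
        (S has_real_derivative
           (- \<beta> t * I t * S t + p * \<gamma> * (LINT \<rho>:{0..}|lborel. I (t - \<rho>) * \<Phi> \<rho>))) (at t) \<and>
        (L has_real_derivative
           (\<beta> t * I t * S t
             - (LINT \<tau>:{0..}|lborel. \<beta> (t - \<tau>) * I (t - \<tau>) * S (t - \<tau>) * \<Psi> \<tau>))) (at t) \<and>
        (I has_real_derivative
           ((LINT \<tau>:{0..}|lborel. \<beta> (t - \<tau>) * I (t - \<tau>) * S (t - \<tau>) * \<Psi> \<tau>)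
             - \<gamma> * I t - \<mu> * I t)) (at t) \<and>
        (RT has_real_derivative
           (p * \<gamma> * I t - p * \<gamma> * (LINT \<rho>:{0..}|lborel. I (t - \<rho>) * \<Phi> \<rho>))) (at t) \<and>
        (RP has_real_derivative ((1 - p) * \<gamma> * I t)) (at t) \<and>
        (D has_real_derivative (\<mu> * I t)) (at t)"
    \<comment> \<open>discretization nodes\<close>
    and rho_in: "\<forall>j>1. \<forall>i\<in>{1..j}. \<rho> j i \<in> {node \<sigma> M j (i - 1) .. node \<sigma> M j i}"
    and tau_in: "\<forall>j>1. \<forall>i\<in>{1..j}. \<tau> j i \<in> {node \<theta> Lb j (i - 1) .. node \<theta> Lb j i}"
    \<comment> \<open>discrete systems\<close>
    and contj: "\<forall>j>1. continuous_on {0..} (Sj j) \<and> continuous_on {0..} (Lj j) \<and>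
                 continuous_on {0..} (Ij j) \<and> continuous_on {0..} (RTj j) \<and>
                 continuous_on {0..} (RPj j) \<and> continuous_on {0..} (Dj j)"
    and histj: "\<forall>j>1. \<forall>s\<le>0. Sj j s = cS \<and> Ij j s = cI"
    and initj: "\<forall>j>1.
        Lj j 0 = \<beta>\<^sub>0 * cI * cS *
          (\<Sum>i=1..j. (LINT x:{node \<theta> Lb j (i - 1)..node \<theta> Lb j i}|lborel. \<Psi> x) * \<tau> j i) \<and>
        RTj j 0 = cI * p * \<gamma> *
          (\<Sum>i=1..j. (LINT x:{node \<sigma> M j (i - 1)..node \<sigma> M j i}|lborel. \<Phi> x) * \<rho> j i) \<and>
        RPj j 0 = (1 - p) * \<gamma> * cI *
          (\<Sum>i=1..j. (LINT x:{node \<theta> Lb j (i - 1)..node \<theta> Lb j i}|lborel. \<Psi> x) * \<tau> j i) \<and>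
        Dj j 0 = d0"
    and odej: "\<forall>j>1. \<forall>t>0.
        (Sj j has_real_derivative
           (- \<beta> t * Ij j t * Sj j t + p * \<gamma> *
              (\<Sum>i=1..j. (LINT x:{node \<sigma> M j (i - 1)..node \<sigma> M j i}|lborel. \<Phi> x)
                            * Ij j (t - \<rho> j i)))) (at t) \<and>
        (Lj j has_real_derivative
           (\<beta> t * Ij j t * Sj j t -
              (\<Sum>i=1..j. (LINT x:{node \<theta> Lb j (i - 1)..node \<theta> Lb j i}|lborel. \<Psi> x)
                 * \<beta> (t - \<tau> j i) * Ij j (t - \<tau> j i) * Sj j (t - \<tau> j i)))) (at t) \<and>
        (Ij j has_real_derivative
           ((\<Sum>i=1..j. (LINT x:{node \<theta> Lb j (i - 1)..node \<theta> Lb j i}|lborel. \<Psi> x)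
                 * \<beta> (t - \<tau> j i) * Ij j (t - \<tau> j i) * Sj j (t - \<tau> j i))
             - \<gamma> * Ij j t - \<mu> * Ij j t)) (at t) \<and>
        (RTj j has_real_derivative
           (p * \<gamma> * Ij j t - p * \<gamma> *
              (\<Sum>i=1..j. (LINT x:{node \<sigma> M j (i - 1)..node \<sigma> M j i}|lborel. \<Phi> x)
                            * Ij j (t - \<rho> j i)))) (at t) \<and>
        (RPj j has_real_derivative ((1 - p) * \<gamma> * Ij j t)) (at t) \<and>
        (Dj j has_real_derivative (\<mu> * Ij j t)) (at t)"
  shows "\<forall>T>0.
           uniform_limit {0..T} Sj S sequentially \<and>
           uniform_limit {0..T} Lj L sequentially \<and>
           uniform_limit {0..T} Ij I sequentially \<and>
           uniform_limit {0..T} RTj RT sequentially \<and>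
           uniform_limit {0..T} RPj RP sequentially"
proof -
  interpret delay_epidemic_discretization \<theta> Lb \<sigma> M p \<gamma> \<mu> cS cI \<beta> \<Psi> \<Phi> S L I RT RP Sj Lj Ij RTj RPj \<rho> \<tau>
    by unfold_locales
      (use bounds smooth_real_continuous[OF beta(2)] Psi Phi cont hist ode rho_in tau_in contj histj odej
        in \<open>auto simp: delay_integral_def delay_sum_def cell_weight_def mult.assoc\<close>)
  have J: "\<forall>\<^sub>F j in sequentially. 1 < j" by (rule eventually_gt_at_top)
  note moment_\<Psi> = riemann_sum_first_moment[OF Psi _ _ \<tau>] and moment_\<Phi> = riemann_sum_first_moment[OF Phi _ _ \<rho>]
  have "(\<lambda>j. Lj j 0) \<longlonglongrightarrow> L 0" "(\<lambda>j. RTj j 0) \<longlonglongrightarrow> RT 0" "(\<lambda>j. RPj j 0) \<longlonglongrightarrow> RP 0"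
    unfolding init using bounds
    by (auto intro!: Lim_transform_eventually[OF tendsto_mult_left[OF moment_\<Psi>]]
        Lim_transform_eventually[OF tendsto_mult_left[OF moment_\<Phi>]] eventually_mono[OF J]
        simp: initj cell_weight_def)
  then show ?thesis
    using S_I_uniform_limit_nonneg L_uniform_limit RT_uniform_limit RP_uniform_limit by simp
qed

end
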